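(* Let $\sigma$ and $\tau$ be matchings, with $s=|\sigma|$ and $t=|\tau|$. The following are equivalent: (i) $\sigma\leq\tau$; (ii) $1(\sigma+1)1\ \leq\ 1(\tau+1)1(t+2)(t+2)$; (iii) $\sigma(s+1)(s+1)\ \leq\ 1(\tau+1)(t+2)(t+2)1$.
   Context: A matching of order $n$ is a partition of $[2n]$ into blocks (edges) of size two, identified with the word in $[n]^{2n}$ where both vertices of an edge carry the same letter and letters appear in increasing order of left vertices. $|\sigma|$ is the number of edges. For a matching $\alpha$, $\alpha+1$ denotes the word of $\alpha$ with $1$ added to each letter, and words are concatenated: e.g. $1(\sigma+1)1$ is $\sigma$ enclosed by one new edge, $1(\tau+1)1(t+2)(t+2)$ is $\tau$ enclosed by a new edge followed by a further separate edge, $\sigma(s+1)(s+1)$ is $\sigma$ followed by a separate edge, and $1(\tau+1)(t+2)(t+2)1$ is $\tau$ followed by a separate edge, all enclosed by a new edge. $\sigma\le\tau$ means $\sigma$ is a pattern of $\tau$: if $|\sigma|=k$, there are $i_1<\dots<i_{2k}$ with $\{i_p,i_q\}\in\tau$ iff $\{p,q\}\in\sigma$. *)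

theory Defs
  imports Main
begin

text \<open>A matching of order n is represented by its word in [n]^(2n): a list of
  naturals of length 2n, in which every letter 1..n occurs exactly twice (the two
  vertices of an edge), and letters appear in increasing order of their left
  vertices (before any occurrence of letter b, every smaller letter a >= 1 has
  already occurred).\<close>

definition is_matching :: "nat list \<Rightarrow> bool" where
  "is_matching w \<longleftrightarrow>
     (\<exists>n. length w = 2 * n \<and> set w \<subseteq> {1..n} \<and>
          (\<forall>k\<in>{1..n}. count_list w k = 2) \<and>
          (\<forall>j<length w. \<forall>a. 1 \<le> a \<and> a < w ! j \<longrightarrow> (\<exists>i<j. w ! i = a)))"

definition msize :: "nat list \<Rightarrow> nat" where
  "msize w = length w div 2"

definition mshift :: "nat list \<Rightarrow> nat list" where
  "mshift w = map (\<lambda>x. x + 1) w"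

text \<open>Pattern containment sigma <= tau: positions i_1 < ... < i_(2k) in tau such that
  {i_p, i_q} is an edge of tau iff {p, q} is an edge of sigma.\<close>
definition mpattern :: "nat list \<Rightarrow> nat list \<Rightarrow> bool" where
  "mpattern \<sigma> \<tau> \<longleftrightarrow>
     (\<exists>f. strict_mono_on {..<length \<sigma>} f \<and> (\<forall>p<length \<sigma>. f p < length \<tau>) \<and>
          (\<forall>p<length \<sigma>. \<forall>q<length \<sigma>. p \<noteq> q \<longrightarrow>
              (\<tau> ! (f p) = \<tau> ! (f q) \<longleftrightarrow> \<sigma> ! p = \<sigma> ! q)))"

end

theory Submission
  imports Defs
begin

(* An occurrence of sigma in tau is an increasing position map under which the letters of tau
   are an injective relabelling of those of sigma.  Occurrences therefore glue along blocks with
   disjoint alphabets, which gives both forward implications.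
   Conversely, in an occurrence of 1(sigma+1)1 the outer edge goes to an edge of the host that
   encloses the image of sigma+1; the final edge (t+2)(t+2) encloses nothing, so that image lies
   in the block tau+1.  In an occurrence of sigma(s+1)(s+1), if the image of sigma left the block
   tau+1 the last edge would be forced onto the positions carrying t+2 and 1; and a letter of sigma
   sent to the leading 1 would force its partner onto the trailing 1, beyond the image of the last
   edge.  In both cases restricting the occurrence to the block tau+1 gives sigma <= tau. *)

definition pattern_embedding :: "(nat \<Rightarrow> nat) \<Rightarrow> nat list \<Rightarrow> nat list \<Rightarrow> bool" where
  "pattern_embedding f \<sigma> \<tau> \<longleftrightarrow>
     strict_mono_on {..<length \<sigma>} f \<and> (\<forall>p<length \<sigma>. f p < length \<tau>) \<and>
     (\<forall>p<length \<sigma>. \<forall>q<length \<sigma>. p \<noteq> q \<longrightarrow> (\<tau> ! f p = \<tau> ! f q \<longleftrightarrow> \<sigma> ! p = \<sigma> ! q))"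

lemma mpattern_iff_embedding: "mpattern \<sigma> \<tau> \<longleftrightarrow> (\<exists>f. pattern_embedding f \<sigma> \<tau>)"
  unfolding mpattern_def pattern_embedding_def ..

lemma pattern_embeddingI:
  assumes "\<And>p q. p < q \<Longrightarrow> q < length \<sigma> \<Longrightarrow> f p < f q"
    and "\<And>p. p < length \<sigma> \<Longrightarrow> f p < length \<tau>"
    and "\<And>p q. p < length \<sigma> \<Longrightarrow> q < length \<sigma> \<Longrightarrow> p \<noteq> q \<Longrightarrow>
           \<tau> ! f p = \<tau> ! f q \<longleftrightarrow> \<sigma> ! p = \<sigma> ! q"
  shows "pattern_embedding f \<sigma> \<tau>"
  using assms unfolding pattern_embedding_def by (auto intro: strict_mono_onI)

lemma pattern_embedding_less:
  "pattern_embedding f \<sigma> \<tau> \<Longrightarrow> p < q \<Longrightarrow> q < length \<sigma> \<Longrightarrow> f p < f q"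
  unfolding pattern_embedding_def by (auto intro: strict_mono_onD)

lemma pattern_embedding_bound:
  "pattern_embedding f \<sigma> \<tau> \<Longrightarrow> p < length \<sigma> \<Longrightarrow> f p < length \<tau>"
  unfolding pattern_embedding_def by blast

lemma pattern_embedding_eq_iff:
  "pattern_embedding f \<sigma> \<tau> \<Longrightarrow> p < length \<sigma> \<Longrightarrow> q < length \<sigma> \<Longrightarrow>
     \<tau> ! f p = \<tau> ! f q \<longleftrightarrow> \<sigma> ! p = \<sigma> ! q"
  unfolding pattern_embedding_def by (cases "p = q") auto

lemma pattern_embedding_map_iff:
  assumes "inj_on h (set \<sigma>)" and "inj_on k (set \<tau>)"
  shows "pattern_embedding f (map h \<sigma>) (map k \<tau>) \<longleftrightarrow> pattern_embedding f \<sigma> \<tau>"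
proof -
  have "map k \<tau> ! f p = map k \<tau> ! f q \<longleftrightarrow> \<tau> ! f p = \<tau> ! f q"
    if "f p < length \<tau>" "f q < length \<tau>" for p q
    using that inj_on_eq_iff[OF assms(2)] by simp
  moreover have "map h \<sigma> ! p = map h \<sigma> ! q \<longleftrightarrow> \<sigma> ! p = \<sigma> ! q"
    if "p < length \<sigma>" "q < length \<sigma>" for p q
    using that inj_on_eq_iff[OF assms(1)] by simp
  ultimately show ?thesis
    unfolding pattern_embedding_def by (auto simp del: nth_map)
qed

lemma mpattern_map_iff:
  "inj_on h (set \<sigma>) \<Longrightarrow> inj_on k (set \<tau>) \<Longrightarrow> mpattern (map h \<sigma>) (map k \<tau>) \<longleftrightarrow> mpattern \<sigma> \<tau>"
  by (simp add: mpattern_iff_embedding pattern_embedding_map_iff)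

lemma pattern_embedding_restrict:
  assumes f: "pattern_embedding f (x @ \<sigma> @ y) (u @ \<tau> @ v)"
    and window: "\<And>p. p < length \<sigma> \<Longrightarrow>
                   length u \<le> f (length x + p) \<and> f (length x + p) < length u + length \<tau>"
  shows "pattern_embedding (\<lambda>p. f (length x + p) - length u) \<sigma> \<tau>"
proof (rule pattern_embeddingI)
  fix p q assume "p < q" "q < length \<sigma>"
  then have "f (length x + p) < f (length x + q)"
    by (intro pattern_embedding_less[OF f]) simp_all
  with \<open>p < q\<close> \<open>q < length \<sigma>\<close> show "f (length x + p) - length u < f (length x + q) - length u"
    using window[of p] by linarith
next
  fix p assume "p < length \<sigma>"
  then show "f (length x + p) - length u < length \<tau>" using window[of p] by linarith
next
  have target: "(u @ \<tau> @ v) ! f (length x + p) = \<tau> ! (f (length x + p) - length u)"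
    if "p < length \<sigma>" for p
    using window[OF that] by (auto simp: nth_append)
  have source: "(x @ \<sigma> @ y) ! (length x + p) = \<sigma> ! p" if "p < length \<sigma>" for p
    using that by (simp add: nth_append_left)
  fix p q assume p: "p < length \<sigma>" and q: "q < length \<sigma>"
  have "(u @ \<tau> @ v) ! f (length x + p) = (u @ \<tau> @ v) ! f (length x + q) \<longleftrightarrow>
        (x @ \<sigma> @ y) ! (length x + p) = (x @ \<sigma> @ y) ! (length x + q)"
    using p q by (intro pattern_embedding_eq_iff[OF f]) simp_all
  then show "\<tau> ! (f (length x + p) - length u) = \<tau> ! (f (length x + q) - length u) \<longleftrightarrow>
             \<sigma> ! p = \<sigma> ! q"
    by (simp only: target[OF p] target[OF q] source[OF p] source[OF q])
qed

lemma mpattern_extend: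
  assumes "mpattern \<sigma> \<tau>" shows "mpattern \<sigma> (u @ \<tau> @ v)"
proof -
  obtain f where f: "pattern_embedding f \<sigma> \<tau>" using assms mpattern_iff_embedding by blast
  have "pattern_embedding (\<lambda>p. length u + f p) \<sigma> (u @ \<tau> @ v)"
    using pattern_embedding_less[OF f] pattern_embedding_bound[OF f] pattern_embedding_eq_iff[OF f]
    by (intro pattern_embeddingI) (simp_all add: nth_append trans_less_add1)
  then show ?thesis using mpattern_iff_embedding by blast
qed

lemma pattern_embedding_relabelI:
  assumes "\<And>p q. p < q \<Longrightarrow> q < length \<sigma> \<Longrightarrow> f p < f q"
    and "\<And>p. p < length \<sigma> \<Longrightarrow> f p < length \<tau>"
    and "inj_on k (set \<sigma>)" and "\<And>p. p < length \<sigma> \<Longrightarrow> \<tau> ! f p = k (\<sigma> ! p)"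
  shows "pattern_embedding f \<sigma> \<tau>"
  using assms by (intro pattern_embeddingI) (simp_all add: inj_on_eq_iff)

lemma pattern_embedding_relabelE:
  assumes f: "pattern_embedding f \<sigma> \<tau>"
  obtains k where "inj_on k (set \<sigma>)" and "k ` set \<sigma> \<subseteq> set \<tau>"
    and "\<And>p. p < length \<sigma> \<Longrightarrow> \<tau> ! f p = k (\<sigma> ! p)"
proof
  define pos where "pos x = (SOME p. p < length \<sigma> \<and> \<sigma> ! p = x)" for x
  have pos: "pos x < length \<sigma> \<and> \<sigma> ! pos x = x" if "x \<in> set \<sigma>" for x
    using that unfolding pos_def by (rule someI_ex[OF iffD1[OF in_set_conv_nth]])
  define k where "k x = \<tau> ! f (pos x)" for x
  show relabel: "\<tau> ! f p = k (\<sigma> ! p)" if "p < length \<sigma>" for p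
    using that pos[of "\<sigma> ! p"] pattern_embedding_eq_iff[OF f, of p "pos (\<sigma> ! p)"]
    by (simp add: k_def)
  show "inj_on k (set \<sigma>)"
  proof (rule inj_onI)
    fix x y assume "x \<in> set \<sigma>" "y \<in> set \<sigma>" "k x = k y"
    then show "x = y"
      using pos[of x] pos[of y] pattern_embedding_eq_iff[OF f, of "pos x" "pos y"] by (simp add: k_def)
  qed
  show "k ` set \<sigma> \<subseteq> set \<tau>"
    using pos pattern_embedding_bound[OF f] by (auto simp: k_def)
qed

lemma mpattern_append:
  assumes "mpattern \<sigma> \<tau>" and "mpattern \<sigma>' \<tau>'"
    and "set \<sigma> \<inter> set \<sigma>' = {}" and "set \<tau> \<inter> set \<tau>' = {}"
  shows "mpattern (\<sigma> @ \<sigma>') (\<tau> @ \<tau>')"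
proof -
  obtain f f' where f: "pattern_embedding f \<sigma> \<tau>" and f': "pattern_embedding f' \<sigma>' \<tau>'"
    using assms(1,2) mpattern_iff_embedding by blast
  obtain k k' where k: "inj_on k (set \<sigma>)" "k ` set \<sigma> \<subseteq> set \<tau>"
      "\<And>p. p < length \<sigma> \<Longrightarrow> \<tau> ! f p = k (\<sigma> ! p)"
    and k': "inj_on k' (set \<sigma>')" "k' ` set \<sigma>' \<subseteq> set \<tau>'"
      "\<And>p. p < length \<sigma>' \<Longrightarrow> \<tau>' ! f' p = k' (\<sigma>' ! p)"
    using pattern_embedding_relabelE[OF f] pattern_embedding_relabelE[OF f'] by metis
  define g where "g p = (if p < length \<sigma> then f p else length \<tau> + f' (p - length \<sigma>))" for p
  define l where "l x = (if x \<in> set \<sigma> then k x else k' x)" for x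
  have "inj_on l (set (\<sigma> @ \<sigma>'))"
  proof (rule inj_onI)
    fix x y assume "x \<in> set (\<sigma> @ \<sigma>')" "y \<in> set (\<sigma> @ \<sigma>')" "l x = l y"
    then show "x = y"
      using k(1,2) k'(1,2) assms(3,4)
      by (auto simp: l_def inj_on_eq_iff image_subset_iff disjoint_iff split: if_splits)
  qed
  then have "pattern_embedding g (\<sigma> @ \<sigma>') (\<tau> @ \<tau>')"
  proof (rule pattern_embedding_relabelI[rotated 2], simp_all)
    fix p q assume "p < q" "q < length \<sigma> + length \<sigma>'"
    then show "g p < g q"
      using pattern_embedding_less[OF f, of p q] pattern_embedding_less[OF f', of "p - length \<sigma>" "q - length \<sigma>"]
        pattern_embedding_bound[OF f, of p]
      by (auto simp: g_def)
  next
    fix p assume "p < length \<sigma> + length \<sigma>'"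
    then show "g p < length \<tau> + length \<tau>'"
      using pattern_embedding_bound[OF f, of p] pattern_embedding_bound[OF f', of "p - length \<sigma>"]
      by (auto simp: g_def)
    show "(\<tau> @ \<tau>') ! g p = l ((\<sigma> @ \<sigma>') ! p)"
      using \<open>p < length \<sigma> + length \<sigma>'\<close> assms(3) k(3)[of p] k'(3)[of "p - length \<sigma>"]
        pattern_embedding_bound[OF f, of p]
      by (auto simp: g_def l_def nth_append disjoint_iff)
  qed
  then show ?thesis using mpattern_iff_embedding by blast
qed

lemma mpattern_enclose:
  assumes "mpattern \<sigma> \<tau>" and "a \<notin> set \<sigma>" and "b \<notin> set \<tau>"
  shows "mpattern ([a] @ \<sigma> @ [a]) ([b] @ \<tau> @ [b])"
proof -
  obtain f where f: "pattern_embedding f \<sigma> \<tau>" using assms(1) mpattern_iff_embedding by blast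
  obtain k where k: "inj_on k (set \<sigma>)" "k ` set \<sigma> \<subseteq> set \<tau>"
      "\<And>p. p < length \<sigma> \<Longrightarrow> \<tau> ! f p = k (\<sigma> ! p)"
    using pattern_embedding_relabelE[OF f] by metis
  define g where
    "g p = (if p = 0 then 0 else if p = length \<sigma> + 1 then length \<tau> + 1 else Suc (f (p - 1)))" for p
  define l where "l x = (if x = a then b else k x)" for x
  have inner_bound: "f (p - 1) < length \<tau>" if "0 < p" "p \<le> length \<sigma>" for p
    using that by (intro pattern_embedding_bound[OF f]) auto
  have "inj_on l (set ([a] @ \<sigma> @ [a]))"
    using k(1,2) assms(2,3) unfolding l_def inj_on_def by auto
  then have "pattern_embedding g ([a] @ \<sigma> @ [a]) ([b] @ \<tau> @ [b])"
  proof (rule pattern_embedding_relabelI[rotated 2], simp_all)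
    fix p q assume "p < q" "q < Suc (Suc (length \<sigma>))"
    then show "g p < g q"
      using pattern_embedding_less[OF f, of "p - 1" "q - 1"] inner_bound[of p]
      by (auto simp: g_def)
  next
    fix p assume "p < Suc (Suc (length \<sigma>))"
    then show "g p < Suc (Suc (length \<tau>))"
      using inner_bound[of p] by (auto simp: g_def)
    show "(b # \<tau> @ [b]) ! g p = l ((a # \<sigma> @ [a]) ! p)"
      using \<open>p < Suc (Suc (length \<sigma>))\<close> assms(2) inner_bound[of p] k(3)[of "p - 1"]
      by (auto simp: g_def l_def nth_append nth_Cons')
  qed
  then show ?thesis using mpattern_iff_embedding by blast
qed

lemma mpattern_pair: "mpattern [a, a] [b, b]"
proof -
  have "mpattern [] []" unfolding mpattern_def by simp
  from mpattern_enclose[OF this] show ?thesis by simp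
qed

lemma mpattern_enclose_appendD:
  assumes "mpattern ([a] @ \<sigma> @ [a]) ([b] @ \<tau> @ [b, c, c])" and "c \<noteq> b" and "c \<notin> set \<tau>"
  shows "mpattern \<sigma> \<tau>"
proof -
  obtain g where g: "pattern_embedding g ([a] @ \<sigma> @ [a]) ([b] @ \<tau> @ [b, c, c])"
    using assms(1) mpattern_iff_embedding by blast
  let ?T = "[b] @ \<tau> @ [b, c, c]" and ?last = "length \<sigma> + 1"
  have less: "g p < g q" if "p < q" "q \<le> ?last" for p q
    using that by (intro pattern_embedding_less[OF g]) simp_all
  have last_bound: "g ?last < length \<tau> + 4"
    using pattern_embedding_bound[OF g, of ?last] by simp
  have ends: "?T ! g 0 = ?T ! g ?last"
    using pattern_embedding_eq_iff[OF g, of 0 ?last] by (simp add: nth_append)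
  have "1 \<le> g (1 + p) \<and> g (1 + p) < 1 + length \<tau>" if p: "p < length \<sigma>" for p
  proof
    show "1 \<le> g (1 + p)" using less[of 0 "1 + p"] p by simp
    show "g (1 + p) < 1 + length \<tau>"
    proof (rule ccontr)
      assume "\<not> ?thesis"
      then have "length \<tau> + 2 \<le> g ?last" and "g 0 < length \<tau> + 2"
        using less[of 0 "1 + p"] less[of "1 + p" ?last] last_bound p by linarith+
      then have "?T ! g ?last = c" and "?T ! g 0 \<in> insert b (set \<tau>)"
        using last_bound by (auto simp: nth_append nth_Cons')
      then show False using ends assms(2,3) by auto
    qed
  qed
  then have "pattern_embedding (\<lambda>p. g (1 + p) - 1) \<sigma> \<tau>"
    using pattern_embedding_restrict[OF g] by simp
  then show ?thesis using mpattern_iff_embedding by blast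
qed

lemma mpattern_append_pairD:
  assumes "mpattern (\<sigma> @ [a, a]) ([b] @ \<tau> @ [c, c, b])" and "c \<noteq> b" and "b \<notin> set \<tau>"
    and partner: "\<And>i. i < length \<sigma> \<Longrightarrow> \<exists>j<length \<sigma>. j \<noteq> i \<and> \<sigma> ! j = \<sigma> ! i"
  shows "mpattern \<sigma> \<tau>"
proof -
  obtain g where g: "pattern_embedding g (\<sigma> @ [a, a]) ([b] @ \<tau> @ [c, c, b])"
    using assms(1) mpattern_iff_embedding by blast
  let ?T = "[b] @ \<tau> @ [c, c, b]" and ?m = "length \<sigma>"
  have less: "g p < g q" if "p < q" "q \<le> ?m + 1" for p q
    using that by (intro pattern_embedding_less[OF g]) simp_all
  have last_bound: "g (?m + 1) < length \<tau> + 4"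
    using pattern_embedding_bound[OF g, of "?m + 1"] by simp
  have pair_less: "g ?m < g (?m + 1)" by (rule less) simp_all
  have ends: "?T ! g ?m = ?T ! g (?m + 1)"
    using pattern_embedding_eq_iff[OF g, of ?m "?m + 1"] by (simp add: nth_append)
  have "1 \<le> g p \<and> g p < 1 + length \<tau>" if p: "p < ?m" for p
  proof
    have "g p < g ?m" using p by (intro less) simp_all
    show "g p < 1 + length \<tau>"
    proof (rule ccontr)
      assume "\<not> ?thesis"
      then have "g ?m = length \<tau> + 2" and "g (?m + 1) = length \<tau> + 3"
        using \<open>g p < g ?m\<close> pair_less last_bound by linarith+
      then show False using ends assms(2) by (simp add: nth_append)
    qed
    show "1 \<le> g p"
    proof (rule ccontr)
      assume "\<not> ?thesis"
      then have "g p = 0" by simp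
      obtain q where q: "q < ?m" "q \<noteq> p" "\<sigma> ! q = \<sigma> ! p" using partner[OF p] by blast
      have "g q \<noteq> 0" using less[of p q] less[of q p] q(1,2) p \<open>g p = 0\<close> by (cases "p < q") auto
      moreover have "g q < g ?m" using q(1) by (intro less) simp_all
      then have "g q < length \<tau> + 3" using pair_less last_bound by linarith
      ultimately have "?T ! g q \<in> insert c (set \<tau>)" by (auto simp: nth_append nth_Cons')
      moreover have "?T ! g q = ?T ! g p"
        using pattern_embedding_eq_iff[OF g, of q p] p q by (simp add: nth_append)
      ultimately show False using \<open>g p = 0\<close> assms(2,3) by auto
    qed
  qed
  moreover have "pattern_embedding g ([] @ \<sigma> @ [a, a]) ([b] @ \<tau> @ [c, c, b])" using g by simp
  ultimately have "pattern_embedding (\<lambda>p. g p - 1) \<sigma> \<tau>"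
    using pattern_embedding_restrict by fastforce
  then show ?thesis using mpattern_iff_embedding by blast
qed

lemma mpattern_enclose_append_iff:
  assumes "a \<notin> set \<sigma>" and "b \<notin> set \<tau>" and "c \<noteq> b" and "c \<notin> set \<tau>"
  shows "mpattern \<sigma> \<tau> \<longleftrightarrow> mpattern ([a] @ \<sigma> @ [a]) ([b] @ \<tau> @ [b, c, c])"
proof
  assume "mpattern \<sigma> \<tau>"
  then have "mpattern ([a] @ \<sigma> @ [a]) ([] @ ([b] @ \<tau> @ [b]) @ [c, c])"
    using assms(1,2) by (intro mpattern_extend mpattern_enclose)
  then show "mpattern ([a] @ \<sigma> @ [a]) ([b] @ \<tau> @ [b, c, c])" by simp
qed (use assms(3,4) mpattern_enclose_appendD in blast)

lemma mpattern_append_pair_iff: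
  assumes "a \<notin> set \<sigma>" and "b \<notin> set \<tau>" and "c \<noteq> b" and "c \<notin> set \<tau>"
    and "\<And>i. i < length \<sigma> \<Longrightarrow> \<exists>j<length \<sigma>. j \<noteq> i \<and> \<sigma> ! j = \<sigma> ! i"
  shows "mpattern \<sigma> \<tau> \<longleftrightarrow> mpattern (\<sigma> @ [a, a]) ([b] @ \<tau> @ [c, c, b])"
proof
  assume "mpattern \<sigma> \<tau>"
  then have "mpattern (\<sigma> @ [a, a]) ([b] @ (\<tau> @ [c, c]) @ [b])"
    using assms(1,4) mpattern_pair by (intro mpattern_extend mpattern_append) auto
  then show "mpattern (\<sigma> @ [a, a]) ([b] @ \<tau> @ [c, c, b])" by simp
qed (use assms(2,3,5) mpattern_append_pairD in blast)

lemma is_matching_letters: "is_matching w \<Longrightarrow> set w \<subseteq> {1..msize w}"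
  unfolding is_matching_def msize_def by auto

lemma is_matching_partner:
  assumes "is_matching w" and "i < length w"
  shows "\<exists>j<length w. j \<noteq> i \<and> w ! j = w ! i"
proof (rule ccontr)
  assume "\<not> ?thesis"
  then have "{j. j < length w \<and> w ! j = w ! i} \<subseteq> {i}" by auto
  then have "count_list w (w ! i) \<le> 1"
    using card_mono[of "{i}"] by (simp add: count_list_eq_length_filter length_filter_conv_card eq_commute)
  moreover have "w ! i \<in> {1..msize w}" using assms is_matching_letters nth_mem by blast
  ultimately show False
    using assms(1) unfolding is_matching_def msize_def by auto
qed

lemma mpattern_mshift_iff: "mpattern (mshift \<sigma>) (mshift \<tau>) \<longleftrightarrow> mpattern \<sigma> \<tau>"
  unfolding mshift_def by (rule mpattern_map_iff) simp_all

lemma mpattern_mshift_right_iff: "mpattern \<sigma> (mshift \<tau>) \<longleftrightarrow> mpattern \<sigma> \<tau>"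
  using mpattern_map_iff[of id \<sigma> "\<lambda>x. x + 1" \<tau>] unfolding mshift_def by simp

theorem lemma1:
  fixes \<sigma> \<tau> :: "nat list"
  assumes "is_matching \<sigma>" and "is_matching \<tau>"
  defines "s \<equiv> msize \<sigma>" and "t \<equiv> msize \<tau>"
  shows "(mpattern \<sigma> \<tau> \<longleftrightarrow>
            mpattern ([1] @ mshift \<sigma> @ [1]) ([1] @ mshift \<tau> @ [1, t + 2, t + 2]))
       \<and> (mpattern \<sigma> \<tau> \<longleftrightarrow>
            mpattern (\<sigma> @ [s + 1, s + 1]) ([1] @ mshift \<tau> @ [t + 2, t + 2, 1]))"
proof -
  have fresh: "s + 1 \<notin> set \<sigma>" "1 \<notin> set (mshift \<sigma>)" "1 \<notin> set (mshift \<tau>)" "t + 2 \<notin> set (mshift \<tau>)"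
    using is_matching_letters[OF assms(1)] is_matching_letters[OF assms(2)]
    by (auto simp: s_def t_def mshift_def)
  have "mpattern \<sigma> \<tau> \<longleftrightarrow> mpattern (mshift \<sigma>) (mshift \<tau>)"
    by (rule mpattern_mshift_iff[symmetric])
  also have "\<dots> \<longleftrightarrow> mpattern ([1] @ mshift \<sigma> @ [1]) ([1] @ mshift \<tau> @ [1, t + 2, t + 2])"
    using fresh by (intro mpattern_enclose_append_iff) simp_all
  finally have ii: "mpattern \<sigma> \<tau> \<longleftrightarrow> \<dots>" .
  have "mpattern \<sigma> \<tau> \<longleftrightarrow> mpattern \<sigma> (mshift \<tau>)"
    by (rule mpattern_mshift_right_iff[symmetric])
  also have "\<dots> \<longleftrightarrow> mpattern (\<sigma> @ [s + 1, s + 1]) ([1] @ mshift \<tau> @ [t + 2, t + 2, 1])"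
    using fresh is_matching_partner[OF assms(1)] by (intro mpattern_append_pair_iff) simp_all
  finally show ?thesis using ii by blast
qed

end
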